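(* Let $G$ be a finite $3$-group with $\psi'(G)>\frac{31}{77}$. Then either $G\simeq \mathcal{C}_{3^t}$ for some integer $t\ge 0$, or $G\simeq \mathcal{C}_3\times\mathcal{C}_3$.
   Context: For a finite group $G$, $\psi(G)=\sum_{x\in G} o(x)$ and $\psi'(G)=\psi(G)/\psi(\mathcal{C}_{|G|})$, where $\mathcal{C}_n$ is the cyclic group of order $n$. *)

theory Defs
  imports "HOL-Algebra.Algebra"
begin

definition psi :: "('a, 'b) monoid_scheme \<Rightarrow> nat" where
  "psi G = (\<Sum>x\<in>carrier G. group.ord G x)"

abbreviation cyclic_grp :: "nat \<Rightarrow> int monoid" where
  "cyclic_grp n \<equiv> integer_mod_group n"

definition psi' :: "('a, 'b) monoid_scheme \<Rightarrow> real" where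
  "psi' G = real (psi G) / real (psi (cyclic_grp (order G)))"

end

theory Submission
  imports Defs "HOL-Number_Theory.Totient"
begin

(* Counting only its 2 * 3^j generators, psi(C_{3^(j+1)}) >= 6 * 9^j.  In a noncyclic G of order
   3^(j+1) every element order divides 3^j; the point is to find 3^j elements whose order divides
   3^(j-1) (trivial if no element has order 3^j).  If g has order 3^j, then <g> has index 3 and is
   normal since |G| is odd; any y outside <g> satisfies y g y^-1 = g^rho with rho = 1 (mod 3), and
   y^3 = g^(3k) because y does not generate G.  For each i < 3 the 3^(j-1) elements y^i g^(2ki+3b)
   then have order dividing 3^(j-1), so 3 psi(G) <= 7 * 9^j and psi'(G) <= 7/18 < 31/77 for j >= 2.
   For j = 1 the same relations make y and g commute, so G is C_3 x C_3. *)

lemma dvd_prime_pow_pred: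
  assumes "Factorial_Ring.prime (p::nat)" "d dvd p ^ Suc j" "d \<noteq> p ^ Suc j"
  shows "d dvd p ^ j"
proof -
  obtain i where "i \<le> Suc j" "d = p ^ i" using assms(1,2) divides_primepow_nat by blast
  then show ?thesis using assms(3) by (metis le_SucE le_imp_power_dvd)
qed

lemma cube_mod_three: "(\<rho>::nat) ^ 3 mod 3 = \<rho> mod 3"
proof -
  have "\<rho> ^ 3 mod 3 = (\<rho> mod 3) ^ 3 mod 3" by (simp add: power_mod)
  moreover have "\<rho> mod 3 = 0 \<or> \<rho> mod 3 = 1 \<or> \<rho> mod 3 = 2" by presburger
  ultimately show ?thesis by auto
qed

lemma nine_dvd_cube_exponent:
  assumes "(\<rho>::nat) mod 3 = 1"
  shows "9 dvd (\<rho> + \<rho>^2 + \<rho>^3) * (2*k + 3*b) + 3*k"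
proof -
  obtain q where q: "\<rho> = 3*q + 1" using assms by (metis mult.commute div_mult_mod_eq)
  have "(\<rho> + \<rho>^2 + \<rho>^3) * (2*k + 3*b) + 3*k = 9 * ((2*q + 4*q^2 + 3*q^3) * (2*k + 3*b) + k + b)"
    unfolding q by (simp add: algebra_simps power2_eq_square power3_eq_cube)
  then show ?thesis by simp
qed

lemma sum_le_card_mul_bounds:
  fixes f :: "'a \<Rightarrow> nat"
  assumes "finite A" "S \<subseteq> A" "\<And>x. x \<in> S \<Longrightarrow> f x \<le> m" "\<And>x. x \<in> A \<Longrightarrow> f x \<le> M"
  shows "sum f A \<le> card S * m + (card A - card S) * M"
proof -
  have "sum f A = sum f S + sum f (A - S)"
    using assms(1,2) by (metis sum.subset_diff add.commute)
  also have "\<dots> \<le> card S * m + card (A - S) * M"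
    using sum_bounded_above[of S f m] sum_bounded_above[of "A - S" f M] assms(3,4)
    by (intro add_mono) auto
  also have "card (A - S) = card A - card S"
    using assms(1,2) by (simp add: card_Diff_subset finite_subset)
  finally show ?thesis .
qed

lemma totient_mul_le_psi_integer_mod_group:
  assumes "1 < n"
  shows "totient n * n \<le> psi (integer_mod_group n)"
proof -
  let ?Z = "integer_mod_group n"
  interpret Z: group ?Z by simp
  have carrier: "carrier ?Z = {0..<int n}" using assms by (simp add: carrier_integer_mod_group)
  have generator: "int k \<in> carrier ?Z \<and> Z.ord (int k) = n" if k: "k \<in> totatives n" for k
  proof
    have k': "0 < k" "k \<le> n" "coprime k n" using k by (auto simp: in_totatives_iff)
    then have "k \<noteq> n" using assms by auto
    then show kc: "int k \<in> carrier ?Z" using k' carrier by auto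
    have "(int k) [^]\<^bsub>?Z\<^esub> m = \<one>\<^bsub>?Z\<^esub> \<longleftrightarrow> n dvd m" for m
    proof -
      have "(int k) [^]\<^bsub>?Z\<^esub> m = \<one>\<^bsub>?Z\<^esub> \<longleftrightarrow> (int m * int k) mod int n = 0" by simp
      also have "\<dots> \<longleftrightarrow> n dvd m * k" by (metis dvd_eq_mod_eq_0 of_nat_dvd_iff of_nat_mult)
      also have "\<dots> \<longleftrightarrow> n dvd m" using k'(3) by (simp add: coprime_commute coprime_dvd_mult_left_iff)
      finally show ?thesis .
    qed
    then show "Z.ord (int k) = n" using Z.ord_unique[OF kc] by simp
  qed
  have "totient n * n = (\<Sum>k\<in>totatives n. Z.ord (int k))" using generator by (simp add: totient_def)
  also have "\<dots> = (\<Sum>x\<in>int ` totatives n. Z.ord x)" by (simp add: sum.reindex)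
  also have "\<dots> \<le> (\<Sum>x\<in>carrier ?Z. Z.ord x)"
    using generator carrier by (intro sum_mono2) auto
  finally show ?thesis unfolding psi_def .
qed

lemma (in group_hom) iso_of_card_eq:
  assumes "finite (carrier H)" "card (carrier G) = card (carrier H)"
    and "\<And>x. x \<in> carrier G \<Longrightarrow> h x = \<one>\<^bsub>H\<^esub> \<Longrightarrow> x = \<one>"
  shows "h \<in> iso G H"
proof -
  have inj: "inj_on h (carrier G)" using assms(3) inj_on_one_iff by blast
  have "h ` carrier G = carrier H"
    using card_image[OF inj] assms(1,2) hom_closed by (intro card_subset_eq) auto
  then show ?thesis using inj homh by (simp add: iso_iff_mon_epi mon_def epi_def)
qed

context group
begin

lemma int_pow_commute_left:
  assumes "x \<otimes> y = y \<otimes> x" "x \<in> carrier G" "y \<in> carrier G"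
  shows "x [^] (i::int) \<otimes> y = y \<otimes> x [^] i"
proof (cases i rule: int_cases2)
  case (nonneg n)
  then show ?thesis using assms by (simp add: int_pow_int group_commutes_pow)
next
  case (nonpos n)
  have "x [^] n \<otimes> y = y \<otimes> x [^] n" using assms by (simp add: group_commutes_pow)
  then have "y \<otimes> inv (x [^] n) = inv (x [^] n) \<otimes> y"
    using assms by (metis inv_closed inv_solve_left inv_solve_right m_assoc m_closed nat_pow_closed)
  then show ?thesis using nonpos assms by (simp add: int_pow_neg_int)
qed

lemma int_pow_commute:
  assumes "x \<otimes> y = y \<otimes> x" "x \<in> carrier G" "y \<in> carrier G"
  shows "x [^] (i::int) \<otimes> y [^] (j::int) = y [^] j \<otimes> x [^] i"
  using assms int_pow_commute_left[of y "x [^] i" j] int_pow_commute_left[of x y i] by simp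

lemma nat_pow_mod_ord:
  assumes "g \<in> carrier G"
  shows "g [^] (m mod ord g) = g [^] (m::nat)"
proof -
  have "g [^] m = g [^] (ord g * (m div ord g) + m mod ord g)"
    by simp
  also have "\<dots> = (g [^] ord g) [^] (m div ord g) \<otimes> g [^] (m mod ord g)"
    by (simp only: nat_pow_pow[OF assms] nat_pow_mult[OF assms])
  finally show ?thesis using assms by simp
qed

lemma int_pow_eq_nat_pow:
  assumes "finite (carrier G)" "g \<in> carrier G"
  shows "\<exists>k::nat. g [^] (i::int) = g [^] k"
proof -
  have "ord g > 0" using ord_ge_1[OF assms] by simp
  then have "g [^] i = g [^] (int (nat (i mod int (ord g))))"
    using assms(2) by (simp add: int_pow_eq mod_eq_dvd_iff[symmetric])
  then show ?thesis by (metis int_pow_int)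
qed

lemma conj_nat_pow:
  assumes "z \<in> carrier G" "a \<in> carrier G"
  shows "z \<otimes> a [^] (k::nat) \<otimes> inv z = (z \<otimes> a \<otimes> inv z) [^] k"
proof (induction k)
  case (Suc k)
  have "z \<otimes> a [^] Suc k \<otimes> inv z = (z \<otimes> a [^] k \<otimes> inv z) \<otimes> (z \<otimes> a \<otimes> inv z)"
    using assms by (simp add: m_assoc flip: m_assoc[of "inv z" z])
  then show ?case using Suc by simp
qed (use assms in simp)

lemma conj_nat_pow_iterate:
  assumes z: "z \<in> carrier G" and g: "g \<in> carrier G"
    and conj: "z \<otimes> g \<otimes> inv z = g [^] (\<rho>::nat)"
  shows "z [^] (k::nat) \<otimes> g [^] (c::nat) \<otimes> inv (z [^] k) = g [^] (\<rho> ^ k * c)"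
proof (induction k arbitrary: c)
  case 0
  then show ?case using g by simp
next
  case (Suc k)
  have "z [^] Suc k \<otimes> g [^] c \<otimes> inv (z [^] Suc k)
      = z \<otimes> (z [^] k \<otimes> g [^] c \<otimes> inv (z [^] k)) \<otimes> inv z"
    unfolding nat_pow_Suc2[OF z] using z g by (simp add: inv_mult_group m_assoc del: nat_pow_Suc)
  also have "\<dots> = (z \<otimes> g \<otimes> inv z) [^] (\<rho> ^ k * c)"
    using Suc conj_nat_pow[OF z g] by simp
  also have "\<dots> = g [^] (\<rho> ^ Suc k * c)"
    using conj g by (simp add: nat_pow_pow mult.assoc)
  finally show ?case .
qed

lemma cube_mul_conj_pow:
  assumes z: "z \<in> carrier G" and g: "g \<in> carrier G"
    and conj: "z \<otimes> g \<otimes> inv z = g [^] (\<rho>::nat)"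
  shows "(z \<otimes> g [^] (c::nat)) [^] (3::nat) = g [^] ((\<rho> + \<rho>^2 + \<rho>^3) * c) \<otimes> z [^] (3::nat)"
proof -
  define a where "a = g [^] c"
  have a: "a \<in> carrier G" unfolding a_def using g by simp
  have "(z \<otimes> a) [^] (3::nat) = (z [^] (1::nat) \<otimes> a \<otimes> inv (z [^] (1::nat)))
      \<otimes> (z [^] (2::nat) \<otimes> a \<otimes> inv (z [^] (2::nat))) \<otimes> (z [^] (3::nat) \<otimes> a \<otimes> inv (z [^] (3::nat)))
      \<otimes> z [^] (3::nat)"
    using z a by (simp add: numeral_3_eq_3 numeral_2_eq_2 m_assoc inv_mult_group
        flip: m_assoc[of "inv z" z])
  also have "\<dots> = g [^] (\<rho> * c) \<otimes> g [^] (\<rho>^2 * c) \<otimes> g [^] (\<rho>^3 * c) \<otimes> z [^] (3::nat)"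
    unfolding a_def conj_nat_pow_iterate[OF z g conj] by simp
  also have "\<dots> = g [^] ((\<rho> + \<rho>^2 + \<rho>^3) * c) \<otimes> z [^] (3::nat)"
    using g by (simp add: nat_pow_mult add_mult_distrib)
  finally show ?thesis unfolding a_def .
qed

lemma conj_exponent_mod_three:
  assumes z: "z \<in> carrier G" and g: "g \<in> carrier G"
    and conj: "z \<otimes> g \<otimes> inv z = g [^] (\<rho>::nat)"
    and comm: "z [^] (3::nat) \<otimes> g = g \<otimes> z [^] (3::nat)" and three: "3 dvd ord g"
  shows "\<rho> mod 3 = 1"
proof -
  have "g [^] (\<rho> ^ 3) = z [^] (3::nat) \<otimes> g [^] (1::nat) \<otimes> inv (z [^] (3::nat))"
    using conj_nat_pow_iterate[OF z g conj, of 3 1] by simp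
  also have "\<dots> = g \<otimes> z [^] (3::nat) \<otimes> inv (z [^] (3::nat))" using g comm by simp
  also have "\<dots> = g [^] (1::nat)" using z g by (simp add: m_assoc)
  finally have "int (ord g) dvd int 1 - int (\<rho> ^ 3)"
    using int_pow_eq[OF g] by (metis int_pow_int)
  moreover have "int 3 dvd int (ord g)" using three by (simp only: int_dvd_int_iff)
  ultimately have "int 3 dvd 1 - int (\<rho> ^ 3)" using dvd_trans by auto
  then have "\<rho> ^ 3 mod 3 = 1" by presburger
  then show ?thesis using cube_mod_three by simp
qed

(* By cube_mul_conj_pow, (z \<otimes> g [^] c) [^] 3 = g [^] ((\<rho> + \<rho>^2 + \<rho>^3) * c + 3 * k), and
   \<rho> + \<rho>^2 + \<rho>^3 = 3 (mod 9); so the cube is a power of g [^] 9 once c = 2 * k (mod 3). *)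
lemma ord_mul_pow_dvd_of_conj:
  assumes z: "z \<in> carrier G" and g: "g \<in> carrier G"
    and conj: "z \<otimes> g \<otimes> inv z = g [^] (\<rho>::nat)" and \<rho>: "\<rho> mod 3 = 1"
    and cube: "z [^] (3::nat) = g [^] (3 * k :: nat)"
    and ord: "ord g = 3 ^ j" and j: "2 \<le> j"
  shows "ord (z \<otimes> g [^] (2 * k + 3 * b)) dvd 3 ^ (j - 1)"
proof -
  define c where "c = 2 * k + 3 * b"
  define i where "i = j - 2"
  have i: "j = Suc (Suc i)" using j unfolding i_def by simp
  obtain t where t: "(\<rho> + \<rho>^2 + \<rho>^3) * c + 3 * k = 9 * t"
    using nine_dvd_cube_exponent[OF \<rho>, of k b] unfolding c_def by (rule dvdE)
  have "(z \<otimes> g [^] c) [^] ((3::nat) ^ (j - 1)) = ((z \<otimes> g [^] c) [^] (3::nat)) [^] ((3::nat) ^ i)"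
    using z g i by (simp add: nat_pow_pow)
  also have "\<dots> = (g [^] (9 * t)) [^] ((3::nat) ^ i)"
    using cube_mul_conj_pow[OF z g conj, of c] cube g by (simp add: nat_pow_mult flip: t)
  also have "\<dots> = (g [^] ord g) [^] t"
    using g ord i by (simp add: nat_pow_pow mult_ac)
  also have "\<dots> = \<one>" using g by simp
  finally show ?thesis unfolding c_def using pow_eq_id z g by simp
qed

lemma ord_eq_of_cube_eq_pow:
  assumes y: "y \<in> carrier G" and g: "g \<in> carrier G" "ord g = 3 ^ j" and j: "1 \<le> j"
    and cube: "y [^] (3::nat) = g [^] (s::nat)" and s: "\<not> 3 dvd s"
  shows "ord y = 3 ^ Suc j"
proof -
  have "coprime (ord g) s" using g(2) s prime_imp_coprime[of "3::nat" s] by simp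
  then have "ord (y [^] (3::nat)) = 3 ^ j"
    unfolding cube using ord_pow_gen[OF g(1), of s] g(2) s by (auto simp: coprime_iff_gcd_eq_1)
  then have quot: "ord y div gcd (ord y) 3 = 3 ^ j" using ord_pow_gen[OF y, of 3] by simp
  have "gcd (ord y) 3 = 3"
  proof (rule ccontr)
    assume "gcd (ord y) 3 \<noteq> 3"
    then have "gcd (ord y) 3 = 1"
      using divides_primepow_nat[of 3 "gcd (ord y) 3" 1] by (auto simp: le_Suc_eq)
    then have "ord y = 3 ^ j" using quot by simp
    then have "3 dvd ord y" using j by (simp add: dvd_power)
    then show False using \<open>gcd (ord y) 3 \<noteq> 3\<close> by simp
  qed
  then show ?thesis using quot by (metis dvd_div_mult_self gcd_dvd1 mult.commute power_Suc)
qed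

lemma exists_nontrivial:
  assumes "1 < order G"
  shows "\<exists>x\<in>carrier G. x \<noteq> \<one>"
proof (rule ccontr)
  assume "\<not> ?thesis"
  then have "carrier G \<subseteq> {\<one>}" by blast
  then have "order G \<le> 1" unfolding order_def using card_mono[of "{\<one>}"] by simp
  then show False using assms by simp
qed

lemma exists_ord_eq_prime_order:
  assumes "Factorial_Ring.prime (order G)"
  shows "\<exists>x\<in>carrier G. ord x = order G"
proof -
  obtain x where x: "x \<in> carrier G" "x \<noteq> \<one>"
    using exists_nontrivial assms prime_gt_1_nat by blast
  have "ord x dvd order G" using ord_dvd_group_order[OF x(1)] .
  then show ?thesis using x assms ord_eq_1 by (metis prime_nat_iff)
qed

lemma two_le_exponent_of_noncyclic:
  assumes "Factorial_Ring.prime p" "order G = p ^ n" "\<forall>x\<in>carrier G. ord x \<noteq> order G"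
  shows "2 \<le> n"
proof -
  have "n \<noteq> 0" using assms(2,3) ord_id one_closed by (metis power_0)
  moreover have "n \<noteq> 1" using assms exists_ord_eq_prime_order by force
  ultimately show ?thesis by linarith
qed

lemma hom_integer_mod_group_int_pow:
  assumes "g \<in> carrier G" "ord g dvd n"
  shows "(\<lambda>i. g [^] i) \<in> hom (integer_mod_group n) G"
proof (rule homI)
  fix a b
  have "int n dvd (a + b) - (a + b) mod int n"
    by (simp add: mod_eq_dvd_iff)
  then have "int (ord g) dvd (a + b) - (a + b) mod int n"
    using assms(2) by (meson dvd_trans int_dvd_int_iff)
  then have "g [^] ((a + b) mod int n) = g [^] (a + b)"
    using int_pow_eq[OF assms(1)] by blast
  then show "g [^] (a \<otimes>\<^bsub>integer_mod_group n\<^esub> b) = g [^] a \<otimes> g [^] b"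
    using assms(1) by (simp add: int_pow_mult)
qed (use assms in simp)

lemma hom_DirProd_integer_mod_group:
  assumes g: "g \<in> carrier G" and y: "y \<in> carrier G" and comm: "g \<otimes> y = y \<otimes> g"
    and "ord g dvd m" "ord y dvd n"
  shows "(\<lambda>(a, b). g [^] a \<otimes> y [^] b) \<in> hom (integer_mod_group m \<times>\<times> integer_mod_group n) G"
proof (rule homI)
  fix p q
  assume p: "p \<in> carrier (integer_mod_group m \<times>\<times> integer_mod_group n)"
    and q: "q \<in> carrier (integer_mod_group m \<times>\<times> integer_mod_group n)"
  obtain a b c d where ab: "p = (a, b)" and cd: "q = (c, d)" by fastforce
  have "g [^] ((a + c) mod int m) = g [^] a \<otimes> g [^] c"
    using hom_mult[OF hom_integer_mod_group_int_pow[OF g \<open>ord g dvd m\<close>]] p q ab cd by simp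
  moreover have "y [^] ((b + d) mod int n) = y [^] b \<otimes> y [^] d"
    using hom_mult[OF hom_integer_mod_group_int_pow[OF y \<open>ord y dvd n\<close>]] p q ab cd by simp
  moreover have "g [^] c \<otimes> y [^] b = y [^] b \<otimes> g [^] c"
    using int_pow_commute[OF comm g y] .
  ultimately show "(case p \<otimes>\<^bsub>integer_mod_group m \<times>\<times> integer_mod_group n\<^esub> q of (a, b) \<Rightarrow> g [^] a \<otimes> y [^] b)
      = (case p of (a, b) \<Rightarrow> g [^] a \<otimes> y [^] b) \<otimes> (case q of (a, b) \<Rightarrow> g [^] a \<otimes> y [^] b)"
    using g y by (simp add: ab cd m_assoc flip: m_assoc[of "g [^] c"])
qed (use g y in auto)

lemma iso_integer_mod_group_of_ord_eq_order:
  assumes fin: "finite (carrier G)" and g: "g \<in> carrier G" "ord g = order G"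
  shows "G \<cong> integer_mod_group (order G)"
proof -
  let ?Z = "integer_mod_group (order G)"
  have N: "order G > 0" using fin by (simp add: order_gt_0_iff_finite)
  have ker: "i = 0" if "i \<in> carrier ?Z" "g [^] i = \<one>" for i
    using that int_pow_eq_id[OF g(1)] g(2) N
    by (auto simp: carrier_integer_mod_group dest: zdvd_imp_le)
  have "group_hom ?Z G (\<lambda>i. g [^] i)"
    using hom_integer_mod_group_int_pow[OF g(1)] g(2) by (simp add: group_hom_def group_hom_axioms_def)
  then have "(\<lambda>i. g [^] i) \<in> iso ?Z G"
    using fin ker N by (intro group_hom.iso_of_card_eq) (auto simp: carrier_integer_mod_group order_def)
  then show ?thesis using group.iso_sym[OF group_integer_mod_group] is_isoI by blast
qed

lemma iso_DirProd_integer_mod_group_three: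
  assumes order: "order G = 9" and g: "g \<in> carrier G" "ord g = 3" and y: "y \<in> carrier G" "ord y = 3"
    and comm: "g \<otimes> y = y \<otimes> g"
    and not_mem: "y \<notin> range (\<lambda>i::int. g [^] i)" "y \<otimes> y \<notin> range (\<lambda>i::int. g [^] i)"
  shows "G \<cong> integer_mod_group 3 \<times>\<times> integer_mod_group 3"
proof -
  let ?K = "integer_mod_group 3 \<times>\<times> integer_mod_group 3"
  have "group_hom ?K G (\<lambda>(a, b). g [^] a \<otimes> y [^] b)"
    using hom_DirProd_integer_mod_group[OF g(1) y(1) comm] g(2) y(2)
    by (simp add: group_hom_def group_hom_axioms_def DirProd_group)
  moreover have "p = \<one>\<^bsub>?K\<^esub>"
    if p: "p \<in> carrier ?K" and triv: "(case p of (a, b) \<Rightarrow> g [^] a \<otimes> y [^] b) = \<one>" for p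
  proof -
    obtain a b where ab: "p = (a, b)" "a \<in> {0..<3}" "b \<in> {0..<3}"
      using p by (cases p) (simp add: carrier_integer_mod_group)
    have "y [^] b = inv (g [^] a) \<otimes> (g [^] a \<otimes> y [^] b)"
      using g(1) y(1) by (simp flip: m_assoc)
    also have "\<dots> = g [^] (- a)" using triv ab(1) g(1) by (simp add: int_pow_neg)
    finally have yb: "y [^] b \<in> range (\<lambda>i::int. g [^] i)" by (rule range_eqI)
    have "b \<noteq> 1" using yb not_mem(1) y(1) by auto
    moreover have "y [^] (2::int) = y \<otimes> y" using y(1) by (simp add: int_pow_def2 numeral_2_eq_2)
    then have "b \<noteq> 2" using yb not_mem(2) by (intro notI) simp
    ultimately have b: "b = 0" using ab(3) by auto
    then have "int (ord g) dvd a" using triv ab(1) int_pow_eq_id[OF g(1)] g(1) by simp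
    then have "a = 0" using ab(2) g(2) by (auto dest: zdvd_imp_le)
    then show ?thesis using ab(1) b by simp
  qed
  moreover have "finite (carrier G)" using order order_gt_0_iff_finite by simp
  ultimately have "(\<lambda>(a, b). g [^] a \<otimes> y [^] b) \<in> iso ?K G"
    using order by (intro group_hom.iso_of_card_eq) (auto simp: carrier_integer_mod_group order_def)
  then have "?K \<cong> G" by (rule is_isoI)
  then show ?thesis
    by (rule group.iso_sym[OF DirProd_group[OF group_integer_mod_group group_integer_mod_group]])
qed

lemma rcos_mult_right_cancel:
  assumes "M \<subseteq> carrier G" "a \<in> carrier G" "b \<in> carrier G" "h \<in> carrier G"
  shows "M #> (a \<otimes> h) = M #> (b \<otimes> h) \<longleftrightarrow> M #> a = M #> b"
proof
  assume "M #> (a \<otimes> h) = M #> (b \<otimes> h)"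
  then have "M #> (a \<otimes> h) #> inv h = M #> (b \<otimes> h) #> inv h" by simp
  then show "M #> a = M #> b" using assms by (simp add: coset_mult_assoc m_assoc)
qed (use assms in \<open>simp flip: coset_mult_assoc\<close>)

lemma mem_of_square_mem_odd_order:
  assumes "odd (order G)" "subgroup H G" "y \<in> carrier G" "y \<otimes> y \<in> H"
  shows "y \<in> H"
proof -
  define q where "q = (order G + 1) div 2"
  have q: "order G + 1 = 2 * q" using assms(1) unfolding q_def by simp
  have "y = y [^] (order G + 1)" using assms(3) pow_order_eq_1 by (simp add: nat_pow_Suc2[symmetric])
  also have "\<dots> = (y [^] (2::nat)) [^] q" by (simp only: q nat_pow_pow[OF assms(3)])
  also have "\<dots> = (y \<otimes> y) [^] int q" using assms(3) by (simp add: int_pow_int numeral_2_eq_2)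
  finally show ?thesis using subgroup_int_pow_closed[OF assms(2,4)] by metis
qed

lemma rcos_square_distinct:
  assumes H: "subgroup H G" and y: "y \<in> carrier G" "y \<notin> H" "y \<otimes> y \<notin> H"
  shows "H #> y \<noteq> H" "H #> (y \<otimes> y) \<noteq> H" "H #> y \<noteq> H #> (y \<otimes> y)"
proof -
  have Hc: "H \<subseteq> carrier G" using H subgroup.subset by blast
  show "H #> y \<noteq> H" "H #> (y \<otimes> y) \<noteq> H" using H y coset_join1 by auto
  show "H #> y \<noteq> H #> (y \<otimes> y)"
  proof
    assume "H #> y = H #> (y \<otimes> y)"
    then have "H #> \<one> = H #> y"
      using rcos_mult_right_cancel[OF Hc one_closed y(1) y(1)] y(1) by simp
    then show False using Hc \<open>H #> y \<noteq> H\<close> by simp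
  qed
qed

lemma rcosets_index_three:
  assumes H: "subgroup H G" and index: "card (rcosets H) = 3"
    and y: "y \<in> carrier G" "y \<notin> H" "y \<otimes> y \<notin> H"
  shows "rcosets H = {H, H #> y, H #> (y \<otimes> y)}"
proof -
  have Hc: "H \<subseteq> carrier G" using H subgroup.subset by blast
  have "card {H, H #> y, H #> (y \<otimes> y)} = 3" using rcos_square_distinct[OF H y] by auto
  moreover have "{H, H #> y, H #> (y \<otimes> y)} \<subseteq> rcosets H"
    using rcosetsI[OF Hc] coset_mult_one[OF Hc] y(1) by (metis insert_subset empty_subsetI m_closed one_closed)
  moreover have "finite (rcosets H)" using index card_ge_0_finite by force
  ultimately show ?thesis using index card_subset_eq by metis
qed

(* Right multiplication by h permutes the three cosets and fixes H. If it moved H #> x it would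
   swap H #> x and H #> (x \<otimes> x), which is impossible for an element of odd order. *)
lemma conj_mem_index_three:
  assumes odd: "odd (order G)" and H: "subgroup H G" and index: "card (rcosets H) = 3"
    and x: "x \<in> carrier G" "x \<notin> H" and h: "h \<in> H"
  shows "x \<otimes> h \<otimes> inv x \<in> H"
proof (rule ccontr)
  assume not_mem: "x \<otimes> h \<otimes> inv x \<notin> H"
  have Hc: "H \<subseteq> carrier G" using H subgroup.subset by blast
  have hc: "h \<in> carrier G" using h Hc by blast
  have xx: "x \<otimes> x \<notin> H" using mem_of_square_mem_odd_order[OF odd H x(1)] x(2) by blast
  have cosets: "H #> a \<in> {H, H #> x, H #> (x \<otimes> x)}" if "a \<in> carrier G" for a
    using rcosets_index_three[OF H index x xx] rcosetsI[OF Hc that] by blast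
  have shift: "H #> (a \<otimes> h) = H #> (b \<otimes> h) \<longleftrightarrow> H #> a = H #> b"
    if "a \<in> carrier G" "b \<in> carrier G" for a b
    using rcos_mult_right_cancel[OF Hc that hc] .
  have fix_H: "H #> (\<one> \<otimes> h) = H" using coset_join2[OF hc H h] hc by simp
  note distinct = rcos_square_distinct[OF H x xx]
  have "H #> (x \<otimes> h) \<noteq> H #> x"
    using coset_mult_inv2[of H "x \<otimes> h" x] coset_join1[of H "x \<otimes> h \<otimes> inv x"] not_mem x hc Hc H
    by auto
  then have step_x: "H #> (x \<otimes> h) = H #> (x \<otimes> x)"
    using cosets[of "x \<otimes> h"] shift[of x \<one>] fix_H x hc Hc by auto
  have step_xx: "H #> (x \<otimes> x \<otimes> h) = H #> x"
    using cosets[of "x \<otimes> x \<otimes> h"] shift[of "x \<otimes> x" \<one>] shift[of "x \<otimes> x" x] fix_H step_x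
      distinct x hc Hc by auto
  have alternate: "H #> (x \<otimes> h [^] k) = (if even k then H #> x else H #> (x \<otimes> x))" for k :: nat
  proof (induction k)
    case (Suc k)
    have "H #> (x \<otimes> h [^] Suc k) = H #> (x \<otimes> h [^] k) #> h"
      using x hc Hc by (simp add: coset_mult_assoc m_assoc)
    then show ?case
      using Suc step_x step_xx x hc Hc by (auto simp: coset_mult_assoc)
  qed (use x Hc in simp)
  have "odd (ord h)" using odd ord_dvd_group_order[OF hc] dvd_trans by blast
  then have "H #> x = H #> (x \<otimes> x)" using alternate[of "ord h"] x hc by simp
  then show False using distinct by blast
qed

lemma index_three_subgroup_normal:
  assumes odd: "odd (order G)" and H: "subgroup H G" and index: "card (rcosets H) = 3"
  shows "H \<lhd> G"
proof -
  have "x \<otimes> h \<otimes> inv x \<in> H" if x: "x \<in> carrier G" and h: "h \<in> H" for x h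
  proof (cases "x \<in> H")
    case True
    then show ?thesis using H h by (simp add: subgroup.m_closed subgroup.m_inv_closed)
  next
    case False
    then show ?thesis by (rule conj_mem_index_three[OF odd H index x _ h])
  qed
  then show ?thesis using H normal_inv_iff by blast
qed

lemma cube_mem_index_three:
  assumes odd: "odd (order G)" and H: "subgroup H G" and index: "card (rcosets H) = 3"
    and y: "y \<in> carrier G"
  shows "y [^] (3::nat) \<in> H"
proof -
  have Hc: "H \<subseteq> carrier G" using H subgroup.subset by blast
  have cube: "y [^] (3::nat) = y \<otimes> y \<otimes> y" using y by (simp add: numeral_3_eq_3 m_assoc)
  show ?thesis
  proof (cases "y \<in> H")
    case True
    then show ?thesis unfolding cube using H by (simp add: subgroup.m_closed)
  next
    case False
    have yy: "y \<otimes> y \<notin> H" using mem_of_square_mem_odd_order[OF odd H y] False by blast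
    note distinct = rcos_square_distinct[OF H y False yy]
    have "H #> (y \<otimes> y \<otimes> y) \<noteq> H #> y"
      using rcos_mult_right_cancel[OF Hc _ one_closed y, of "y \<otimes> y"] distinct(2) Hc y by simp
    moreover have "H #> (y \<otimes> y \<otimes> y) \<noteq> H #> (y \<otimes> y)"
      using rcos_mult_right_cancel[OF Hc _ y y, of "y \<otimes> y"] distinct(3) y by simp
    moreover have "H #> (y \<otimes> y \<otimes> y) \<in> {H, H #> y, H #> (y \<otimes> y)}"
      using rcosets_index_three[OF H index y False yy] rcosetsI[OF Hc] y by simp
    ultimately have "H #> (y \<otimes> y \<otimes> y) = H" by blast
    then show ?thesis unfolding cube using coset_join1[OF _ _ H] y by blast
  qed
qed

lemma card_powers_eq_ord:
  assumes "g \<in> carrier G"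
  shows "card (range (\<lambda>i::int. g [^] i)) = ord g"
  using cyclic_order_is_ord[OF assms] carrier_subgroup_generated_by_singleton[OF assms]
  unfolding order_def by simp

lemma index_three_cyclic_subgroup_structure:
  assumes order: "order G = 3 ^ Suc j" and j: "1 \<le> j"
    and g: "g \<in> carrier G" "ord g = 3 ^ j"
    and noncyclic: "\<forall>x\<in>carrier G. ord x \<noteq> order G"
  obtains y \<rho> k where "y \<in> carrier G"
    "y \<notin> range (\<lambda>i::int. g [^] i)" "y \<otimes> y \<notin> range (\<lambda>i::int. g [^] i)"
    "y \<otimes> g \<otimes> inv y = g [^] (\<rho>::nat)" "\<rho> mod 3 = 1" "y [^] (3::nat) = g [^] (3 * k :: nat)"
proof -
  define H where "H = range (\<lambda>i::int. g [^] i)"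
  have fin: "finite (carrier G)" using order order_gt_0_iff_finite by simp
  have odd: "odd (order G)" using order by simp
  have H: "subgroup H G" unfolding H_def using subgroup_of_powers[OF g(1)] .
  have powers: "\<exists>k::nat. h = g [^] k" if "h \<in> H" for h
    using that int_pow_eq_nat_pow[OF fin g(1)] unfolding H_def by blast
  have cardH: "card H = 3 ^ j" unfolding H_def using card_powers_eq_ord[OF g(1)] g(2) by simp
  have index: "card (rcosets H) = 3" using lagrange[OF H] order cardH by simp
  have "H \<noteq> carrier G" using cardH order unfolding order_def by auto
  then obtain y where y: "y \<in> carrier G" "y \<notin> H" using subgroup.subset[OF H] by blast
  have yy: "y \<otimes> y \<notin> H" using mem_of_square_mem_odd_order[OF odd H y(1)] y(2) by blast
  have "g \<in> H" unfolding H_def using g(1) by (metis int_pow_1 rangeI)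
  then obtain \<rho> :: nat where \<rho>: "y \<otimes> g \<otimes> inv y = g [^] \<rho>"
    using powers normal.inv_op_closed2[OF index_three_subgroup_normal[OF odd H index] y(1)] by blast
  obtain s :: nat where s: "y [^] (3::nat) = g [^] s"
    using powers cube_mem_index_three[OF odd H index y(1)] by blast
  have "\<rho> mod 3 = 1"
  proof (rule conj_exponent_mod_three[OF y(1) g(1) \<rho>])
    show "y [^] (3::nat) \<otimes> g = g \<otimes> y [^] (3::nat)"
      unfolding s using g(1) by (simp add: nat_pow_Suc2[symmetric])
    show "3 dvd ord g" using g(2) j by (simp add: dvd_power)
  qed
  moreover have "3 dvd s"
    using ord_eq_of_cube_eq_pow[OF y(1) g j s] noncyclic y(1) order by auto
  ultimately show ?thesis using that y yy \<rho> s unfolding H_def by (metis dvdE)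
qed

lemma iso_DirProd_of_order_nine:
  assumes order: "order G = 9" and noncyclic: "\<forall>x\<in>carrier G. ord x \<noteq> order G"
  shows "G \<cong> integer_mod_group 3 \<times>\<times> integer_mod_group 3"
proof -
  have order': "order G = 3 ^ Suc 1" using order by simp
  have ord_three: "ord x = 3" if x: "x \<in> carrier G" "x \<noteq> \<one>" for x
  proof -
    have "ord x dvd 3"
      using dvd_prime_pow_pred[of 3 "ord x" 1] ord_dvd_group_order[OF x(1)] order' noncyclic x(1) by simp
    then show ?thesis using x ord_eq_1 prime_nat_iff[of 3] by auto
  qed
  obtain g where g: "g \<in> carrier G" "g \<noteq> \<one>" using exists_nontrivial order by auto
  have og: "ord g = 3" using ord_three g by blast
  then have "ord g = 3 ^ 1" by simp
  then obtain y \<rho> k where y: "y \<in> carrier G" "y \<notin> range (\<lambda>i::int. g [^] i)"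
      "y \<otimes> y \<notin> range (\<lambda>i::int. g [^] i)"
    and \<rho>: "y \<otimes> g \<otimes> inv y = g [^] (\<rho>::nat)" "\<rho> mod 3 = 1"
    and "y [^] (3::nat) = g [^] (3 * k :: nat)"
    by (rule index_three_cyclic_subgroup_structure[OF order' le_refl g(1) _ noncyclic])
  have "y \<otimes> g \<otimes> inv y = g" using \<rho> nat_pow_mod_ord[OF g(1), of \<rho>] og g(1) by simp
  moreover have "y \<otimes> g = y \<otimes> g \<otimes> inv y \<otimes> y" using g(1) y(1) by (simp add: m_assoc)
  ultimately have comm: "g \<otimes> y = y \<otimes> g" by simp
  have "\<one> \<in> range (\<lambda>i::int. g [^] i)" by (rule range_eqI[of _ _ 0]) simp
  then have "ord y = 3" using ord_three y(1,2) by blast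
  then show ?thesis using iso_DirProd_integer_mod_group_three[OF order g(1) og y(1) _ comm y(2,3)] by simp
qed

lemma nat_pow_mult_subgroup_eq_imp_eq:
  assumes H: "subgroup H G" and y: "y \<in> carrier G" "y \<notin> H" "y \<otimes> y \<notin> H"
    and eq: "y [^] i \<otimes> h = y [^] i' \<otimes> h'" and h: "h \<in> H" "h' \<in> H"
    and "i < 3" "i' < (3::nat)"
  shows "i = i'"
proof -
  have le: "m = n" if mn: "m \<le> n" "n < 3" and e: "y [^] m \<otimes> a = y [^] n \<otimes> b" and ab: "a \<in> H" "b \<in> H"
    for m n :: nat and a b
  proof -
    define d where "d = n - m"
    have d: "n = m + d" using mn(1) unfolding d_def by simp
    have ac: "a \<in> carrier G" "b \<in> carrier G"
      using subgroup.mem_carrier[OF H ab(1)] subgroup.mem_carrier[OF H ab(2)] .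
    have "y [^] m \<otimes> a = y [^] m \<otimes> (y [^] d \<otimes> b)"
      using e y(1) ac unfolding d nat_pow_mult[OF y(1), symmetric] by (simp add: m_assoc)
    then have "a = y [^] d \<otimes> b" using l_cancel[of "y [^] m" a "y [^] d \<otimes> b"] y(1) ac by simp
    then have "y [^] d = a \<otimes> inv b" using inv_solve_right[of "y [^] d" a b] y(1) ac by simp
    moreover have "a \<otimes> inv b \<in> H"
      using ab H by (simp add: subgroup.m_closed subgroup.m_inv_closed)
    ultimately have mem: "y [^] d \<in> H" by simp
    have "y [^] (1::nat) = y" "y [^] (2::nat) = y \<otimes> y" using y(1) by (simp_all add: numeral_2_eq_2)
    then have "d \<noteq> 1" "d \<noteq> 2" using mem y(2,3) by auto
    then show ?thesis using mn d by linarith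
  qed
  show ?thesis
  proof (cases "i \<le> i'")
    case True
    then show ?thesis using le[OF _ _ eq h] \<open>i' < 3\<close> by simp
  next
    case False
    then show ?thesis using le[OF _ _ eq[symmetric] h(2,1)] \<open>i < 3\<close> by simp
  qed
qed

lemma inj_on_pow_mult_pow:
  assumes y: "y \<in> carrier G" "y \<notin> range (\<lambda>i::int. g [^] i)" "y \<otimes> y \<notin> range (\<lambda>i::int. g [^] i)"
    and g: "g \<in> carrier G" "ord g = 3 ^ j" and j: "1 \<le> j"
  shows "inj_on (\<lambda>(i, b). y [^] i \<otimes> g [^] (2 * (k * i) + 3 * b)) ({..<3::nat} \<times> {..<(3::nat) ^ (j - 1)})"
proof (rule inj_onI, clarify)
  fix i b i' b' :: nat
  assume ib: "i < 3" "b < 3 ^ (j - 1)" "i' < 3" "b' < 3 ^ (j - 1)"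
    and eq: "y [^] i \<otimes> g [^] (2 * (k * i) + 3 * b) = y [^] i' \<otimes> g [^] (2 * (k * i') + 3 * b')"
  have H: "subgroup (range (\<lambda>i::int. g [^] i)) G" using subgroup_of_powers[OF g(1)] .
  have in_H: "g [^] (n::nat) \<in> range (\<lambda>i::int. g [^] i)" for n by (metis int_pow_int rangeI)
  have i: "i = i'" using nat_pow_mult_subgroup_eq_imp_eq[OF H y eq in_H in_H ib(1,3)] .
  then have "g [^] (2 * (k * i)) \<otimes> (g [^] (3::nat)) [^] b = g [^] (2 * (k * i)) \<otimes> (g [^] (3::nat)) [^] b'"
    using eq y(1) g(1) by (simp add: nat_pow_mult nat_pow_pow)
  then have "(g [^] (3::nat)) [^] b = (g [^] (3::nat)) [^] b'" using g(1) by simp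
  moreover have "ord (g [^] (3::nat)) = 3 ^ (j - 1)"
    using ord_pow[OF g(1), of 3] g(2) j by (cases j) auto
  ultimately have "b = b'" using ord_inj[of "g [^] (3::nat)"] g(1) ib(2,4) by (auto dest: inj_onD)
  then show "i = i' \<and> b = b'" using i by simp
qed

lemma many_elements_of_small_order:
  assumes order: "order G = 3 ^ Suc j" and j: "2 \<le> j"
    and g: "g \<in> carrier G" "ord g = 3 ^ j"
    and noncyclic: "\<forall>x\<in>carrier G. ord x \<noteq> order G"
  obtains S where "S \<subseteq> carrier G" "card S = 3 ^ j" "\<forall>x\<in>S. ord x dvd 3 ^ (j - 1)"
proof -
  have j1: "1 \<le> j" using j by simp
  obtain y \<rho> k where y: "y \<in> carrier G" "y \<notin> range (\<lambda>i::int. g [^] i)"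
      "y \<otimes> y \<notin> range (\<lambda>i::int. g [^] i)"
    and \<rho>: "y \<otimes> g \<otimes> inv y = g [^] (\<rho>::nat)" "\<rho> mod 3 = 1"
    and cube: "y [^] (3::nat) = g [^] (3 * k :: nat)"
    by (rule index_three_cyclic_subgroup_structure[OF order j1 g noncyclic])
  define S where
    "S = (\<lambda>(i, b). y [^] i \<otimes> g [^] (2 * (k * i) + 3 * b)) ` ({..<3::nat} \<times> {..<(3::nat) ^ (j - 1)})"
  have "S \<subseteq> carrier G" unfolding S_def using y(1) g(1) by auto
  moreover have "card S = 3 * 3 ^ (j - 1)"
    unfolding S_def using inj_on_pow_mult_pow[OF y g j1] by (simp add: card_image card_cartesian_product)
  then have "card S = 3 ^ j" using j by (simp flip: power_Suc)
  moreover have "\<forall>x\<in>S. ord x dvd 3 ^ (j - 1)"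
  proof
    fix x assume "x \<in> S"
    then obtain i b where x: "x = y [^] i \<otimes> g [^] (2 * (k * i) + 3 * b)"
      unfolding S_def by auto
    have "y [^] i \<otimes> g \<otimes> inv (y [^] i) = g [^] (\<rho> ^ i)"
      using conj_nat_pow_iterate[OF y(1) g(1) \<rho>(1), of i 1] g(1) by simp
    moreover have "\<rho> ^ i mod 3 = (\<rho> mod 3) ^ i mod 3" by (simp add: power_mod)
    then have "\<rho> ^ i mod 3 = 1" using \<rho>(2) by simp
    moreover have "(y [^] i) [^] (3::nat) = (y [^] (3::nat)) [^] i"
      using y(1) by (simp add: nat_pow_pow mult.commute)
    then have "(y [^] i) [^] (3::nat) = g [^] (3 * (k * i))"
      using cube g(1) by (simp add: nat_pow_pow mult.assoc)
    ultimately show "ord x dvd 3 ^ (j - 1)"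
      unfolding x using ord_mul_pow_dvd_of_conj[OF _ g(1) _ _ _ g(2) j] y(1) by simp
  qed
  ultimately show ?thesis by (rule that)
qed

lemma psi_le_noncyclic_three_group:
  assumes order: "order G = 3 ^ Suc j" and j: "2 \<le> j"
    and noncyclic: "\<forall>x\<in>carrier G. ord x \<noteq> order G"
  shows "3 * psi G \<le> 7 * 9 ^ j"
proof -
  have fin: "finite (carrier G)" using order order_gt_0_iff_finite by simp
  have card: "card (carrier G) = 3 ^ Suc j" using order unfolding order_def .
  have ord_dvd: "ord x dvd 3 ^ j" if "x \<in> carrier G" for x
    using dvd_prime_pow_pred[of 3 "ord x" j] ord_dvd_group_order[OF that] order noncyclic that by simp
  have pow_eq: "(9::nat) ^ j = 3 ^ j * 3 ^ j" by (simp add: power_mult_distrib[symmetric])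
  show ?thesis
  proof (cases "\<exists>g\<in>carrier G. ord g = 3 ^ j")
    case True
    then obtain g where g: "g \<in> carrier G" "ord g = 3 ^ j" by blast
    obtain S where S: "S \<subseteq> carrier G" "card S = 3 ^ j" "\<forall>x\<in>S. ord x dvd 3 ^ (j - 1)"
      by (rule many_elements_of_small_order[OF order j g noncyclic])
    have "psi G \<le> card S * 3 ^ (j - 1) + (card (carrier G) - card S) * 3 ^ j"
      unfolding psi_def using fin S ord_dvd by (intro sum_le_card_mul_bounds) (auto intro: dvd_imp_le)
    also have "\<dots> = 3 ^ j * 3 ^ (j - 1) + 2 * 3 ^ j * 3 ^ j" unfolding S(2) card by simp
    finally show ?thesis using j pow_eq by (cases j) (auto simp: algebra_simps)
  next
    case False
    have "ord x \<le> 3 ^ (j - 1)" if x: "x \<in> carrier G" for x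
    proof -
      have "ord x dvd 3 ^ Suc (j - 1)" using ord_dvd[OF x] j by simp
      then have "ord x dvd 3 ^ (j - 1)"
        using dvd_prime_pow_pred[of 3 "ord x" "j - 1"] False x j by (simp add: Suc_diff_le)
      then show ?thesis by (simp add: dvd_imp_le)
    qed
    then have "psi G \<le> card (carrier G) * 3 ^ (j - 1)"
      unfolding psi_def using sum_bounded_above by (metis of_nat_id)
    then show ?thesis unfolding card using j pow_eq by (cases j) (auto simp: algebra_simps)
  qed
qed

lemma psi'_le_noncyclic_three_group:
  assumes order: "order G = 3 ^ Suc j" and j: "2 \<le> j"
    and noncyclic: "\<forall>x\<in>carrier G. ord x \<noteq> order G"
  shows "psi' G \<le> 7 / 18"
proof -
  have "totient (3 ^ Suc j) = 3 ^ j * 2" using totient_prime_power_Suc[of 3 j] by simp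
  moreover have "1 < (3::nat) ^ Suc j" by (rule one_less_power) simp_all
  ultimately have "6 * 9 ^ j \<le> psi (cyclic_grp (order G))"
    using totient_mul_le_psi_integer_mod_group[of "3 ^ Suc j"] order
    by (simp add: power_mult_distrib[symmetric] mult_ac)
  moreover have "3 * psi G \<le> 7 * 9 ^ j" using psi_le_noncyclic_three_group[OF order j noncyclic] .
  moreover have "0 < (6::nat) * 9 ^ j" by simp
  ultimately have "18 * psi G \<le> 7 * psi (cyclic_grp (order G))"
    and "0 < psi (cyclic_grp (order G))" by linarith+
  then show ?thesis unfolding psi'_def by (simp add: divide_simps)
qed

end

theorem proposition3p4:
  fixes G :: "('a, 'b) monoid_scheme"
  assumes "group G" and "finite (carrier G)"
    and "\<exists>k::nat. order G = 3 ^ k"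
    and "psi' G > 31 / 77"
  shows "(\<exists>t::nat. G \<cong> cyclic_grp (3 ^ t)) \<or> G \<cong> DirProd (cyclic_grp 3) (cyclic_grp 3)"
proof -
  interpret group G by fact
  obtain n where n: "order G = 3 ^ n" using assms(3) by blast
  show ?thesis
  proof (cases "\<exists>g\<in>carrier G. ord g = order G")
    case True
    then have "G \<cong> cyclic_grp (3 ^ n)"
      using iso_integer_mod_group_of_ord_eq_order assms(2) n by auto
    then show ?thesis by blast
  next
    case False
    then have noncyclic: "\<forall>x\<in>carrier G. ord x \<noteq> order G" by blast
    have "2 \<le> n" using two_le_exponent_of_noncyclic[OF _ n noncyclic] by simp
    then have j: "order G = 3 ^ Suc (n - 1)" "1 \<le> n - 1" using n by (simp_all add: Suc_diff_Suc)
    show ?thesis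
    proof (cases "n - 1 = 1")
      case True
      then have "G \<cong> cyclic_grp 3 \<times>\<times> cyclic_grp 3"
        using iso_DirProd_of_order_nine noncyclic j(1) by simp
      then show ?thesis by blast
    next
      case False
      then have "psi' G \<le> 7 / 18" using psi'_le_noncyclic_three_group[OF j(1) _ noncyclic] j(2) by simp
      then show ?thesis using assms(4) by simp
    qed
  qed
qed

end
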